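(* Let $K,N$ be symmetric homogeneous stable means and $M$ a symmetric homogeneous mean, all having symmetric asymptotic expansions with coefficients $(a^K_n),(a^N_n),(a^M_n)$. If $M$ is simultaneously $(K,N)$-stabilizable and $(K,N)$-stabilized, then $a^K_1=a^N_1=a^M_1$, hence $a^K_n=a^N_n$ for all $n\in\mathbb N_0$, and $a^M_2=\frac16a^M_1(1+a^M_1)(1-4a^M_1)$.
   Context: A bi-variate mean is $M:(0,\infty)^2\to(0,\infty)$ with $\min\le M\le\max$; symmetric and homogeneous (degree 1). $M$ is stable if $M(s,t)=M\big(M(s,M(s,t)),M(M(s,t),t)\big)$. For stable $K,N$: $M$ is $(K,N)$-stabilizable if $M(s,t)=K\big(M(s,N(s,t)),M(N(s,t),t)\big)$, and $(K,N)$-stabilized if $M(s,t)=K\big(N(s,M(s,t)),N(M(s,t),t)\big)$, for all $s,t>0$. A mean has a symmetric asymptotic expansion with coefficients $(a_n)$ if for every fixed real $t$ and $N\ge0$, $M(x-t,x+t)=\sum_{n=0}^Na_nt^{2n}x^{-2n+1}+o(x^{-2N+1})$ as $x\to\infty$. *)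

theory Defs
  imports "HOL-Analysis.Analysis" "HOL-Library.Landau_Symbols"
begin

text \<open>Bivariate means on (0,inf)^2, represented as real functions of two arguments;
  only their values on positive arguments matter.\<close>

definition is_mean :: "(real \<Rightarrow> real \<Rightarrow> real) \<Rightarrow> bool" where
  "is_mean M \<longleftrightarrow> (\<forall>s>0. \<forall>t>0. min s t \<le> M s t \<and> M s t \<le> max s t)"

definition symmetric_mean :: "(real \<Rightarrow> real \<Rightarrow> real) \<Rightarrow> bool" where
  "symmetric_mean M \<longleftrightarrow> (\<forall>s>0. \<forall>t>0. M s t = M t s)"

definition homogeneous_mean :: "(real \<Rightarrow> real \<Rightarrow> real) \<Rightarrow> bool" where
  "homogeneous_mean M \<longleftrightarrow> (\<forall>l>0. \<forall>s>0. \<forall>t>0. M (l * s) (l * t) = l * M s t)"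

definition stable_mean :: "(real \<Rightarrow> real \<Rightarrow> real) \<Rightarrow> bool" where
  "stable_mean M \<longleftrightarrow> (\<forall>s>0. \<forall>t>0. M s t = M (M s (M s t)) (M (M s t) t))"

definition stabilizable :: "(real \<Rightarrow> real \<Rightarrow> real) \<Rightarrow> (real \<Rightarrow> real \<Rightarrow> real) \<Rightarrow> (real \<Rightarrow> real \<Rightarrow> real) \<Rightarrow> bool" where
  "stabilizable K N M \<longleftrightarrow> (\<forall>s>0. \<forall>t>0. M s t = K (M s (N s t)) (M (N s t) t))"

definition stabilized :: "(real \<Rightarrow> real \<Rightarrow> real) \<Rightarrow> (real \<Rightarrow> real \<Rightarrow> real) \<Rightarrow> (real \<Rightarrow> real \<Rightarrow> real) \<Rightarrow> bool" where
  "stabilized K N M \<longleftrightarrow> (\<forall>s>0. \<forall>t>0. M s t = K (N s (M s t)) (N (M s t) t))"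

definition sym_asymp_expansion :: "(real \<Rightarrow> real \<Rightarrow> real) \<Rightarrow> (nat \<Rightarrow> real) \<Rightarrow> bool" where
  "sym_asymp_expansion M a \<longleftrightarrow>
     (\<forall>t::real. \<forall>N::nat.
        (\<lambda>x. M (x - t) (x + t) - (\<Sum>n\<le>N. a n * t ^ (2 * n) * x powr (1 - 2 * real n)))
          \<in> o[at_top](\<lambda>x. x powr (1 - 2 * real N)))"

end

theory Submission
  imports Defs "HOL-Computational_Algebra.Polynomial"
begin

text \<open>A homogeneous symmetric mean is determined by its even profile \<open>\<phi>(w) = X(1 - w, 1 + w)\<close>
  through \<open>X(s, t) = (s + t)/2 \<cdot> \<phi>((t - s)/(s + t))\<close>, and a symmetric asymptotic expansion with
  coefficients \<open>a\<^sub>n\<close> is the same as \<open>\<phi>(w) = \<Sum> a\<^sub>n w\<^sup>2\<^sup>n\<close> to every order at \<open>w = 0\<close>.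
  Evaluating both functional equations at \<open>(1 - u, 1 + u)\<close> and expanding to order \<open>u\<^sup>4\<close> expresses
  \<open>a\<^sup>M\<^sub>1\<close> and \<open>a\<^sup>M\<^sub>2\<close> in two ways through the coefficients of \<open>K, N, M\<close>; the \<open>u\<^sup>2\<close> terms force
  \<open>a\<^sup>K\<^sub>1 = a\<^sup>N\<^sub>1 = a\<^sup>M\<^sub>1\<close>. Stability propagates this to all coefficients: if those of \<open>K\<close> and \<open>N\<close>
  agree below \<open>n \<ge> 2\<close>, the stability equation gives
  \<open>\<alpha> u\<^sup>2\<^sup>n = (1/2 + 2\<^sup>1\<^sup>-\<^sup>2\<^sup>n) \<alpha> u\<^sup>2\<^sup>n + o(u\<^sup>2\<^sup>n)\<close> for \<open>\<alpha> = a\<^sup>K\<^sub>n - a\<^sup>N\<^sub>n\<close>, so \<open>\<alpha> = 0\<close>.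
  With \<open>a\<^sup>K\<^sub>2 = a\<^sup>N\<^sub>2\<close> the two \<open>u\<^sup>4\<close> relations are linear in \<open>a\<^sup>M\<^sub>2\<close> and \<open>a\<^sup>K\<^sub>2\<close>
  and so determine \<open>a\<^sup>M\<^sub>2\<close>.\<close>

section \<open>Asymptotics at 0\<close>

lemma eventually_abs_less_1_at_0: "eventually (\<lambda>u::real. \<bar>u\<bar> < 1) (at 0)"
  unfolding eventually_at by (intro exI[of _ 1]) (auto simp: dist_real_def)

lemma eventually_pos_of_tendsto_1: "(p \<longlongrightarrow> (1::real)) F \<Longrightarrow> eventually (\<lambda>u. p u > 0) F"
  by (erule order_tendstoD(1)) simp

lemma eventually_at_right_0_lt_1: "eventually (\<lambda>w::real. 0 < w \<and> w < 1) (at_right 0)"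
  using eventually_at_right_real[of 0 1] by (simp add: greaterThanLessThan_iff)

lemma bigo_1_of_tendsto: "(f \<longlongrightarrow> (c::real)) F \<Longrightarrow> f \<in> O[F](\<lambda>_. 1)"
  using bigoI_tendsto[of f "\<lambda>_. 1" c F] by simp

lemma smallo_1_iff_tendsto_0: "(f::_ \<Rightarrow> real) \<in> o[F](\<lambda>_. 1) \<longleftrightarrow> (f \<longlongrightarrow> 0) F"
  using smalloI_tendsto[of f "\<lambda>_. 1" F] smalloD_tendsto[of f F "\<lambda>_. 1"] by auto

lemma smallo_congI: "f \<in> o[F](g) \<Longrightarrow> (\<And>x. f x = h x) \<Longrightarrow> h \<in> o[F](g)"
  by (metis ext)

lemma bigo_congI: "f \<in> O[F](g) \<Longrightarrow> (\<And>x. f x = h x) \<Longrightarrow> h \<in> O[F](g)"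
  by (metis ext)

lemma bigo_mult_bounded:
  "(h::_ \<Rightarrow> real) \<in> O[F](\<lambda>_. 1) \<Longrightarrow> f \<in> O[F](g) \<Longrightarrow> (\<lambda>x. h x * f x) \<in> O[F](g)"
  using landau_o.big_mult[of h F "\<lambda>_. 1" f g] by simp

lemma smallo_mult_bounded:
  "(h::_ \<Rightarrow> real) \<in> O[F](\<lambda>_. 1) \<Longrightarrow> f \<in> o[F](g) \<Longrightarrow> (\<lambda>x. h x * f x) \<in> o[F](g)"
  using landau_o.big_small_mult[of h F "\<lambda>_. 1" f g] by simp

lemma smallo_mult_tendsto_0:
  "(h \<longlongrightarrow> (0::real)) F \<Longrightarrow> f \<in> O[F](g) \<Longrightarrow> (\<lambda>x. h x * f x) \<in> o[F](g)"
  using landau_o.small_big_mult[of h F "\<lambda>_. 1" f g] by (simp add: smallo_1_iff_tendsto_0)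

lemma power_bigo_power_at_0:
  assumes "j \<le> k" shows "(\<lambda>u::real. u ^ k) \<in> O[at 0](\<lambda>u. u ^ j)"
proof -
  have "(\<lambda>u::real. u ^ (k - j)) \<in> O[at 0](\<lambda>_. 1)"
    by (rule bigo_1_of_tendsto[of _ "0 ^ (k - j)"]) (intro tendsto_intros)
  from landau_o.big.mult_left[OF this, of "\<lambda>u. u ^ j"] show ?thesis
    using assms by (simp add: power_add[symmetric])
qed

lemma power_smallo_power_at_0:
  assumes "j < k" shows "(\<lambda>u::real. u ^ k) \<in> o[at 0](\<lambda>u. u ^ j)"
proof -
  have "((\<lambda>u::real. u ^ (k - j)) \<longlongrightarrow> 0 ^ (k - j)) (at 0)" by (intro tendsto_intros)
  then have "(\<lambda>u::real. u ^ (k - j)) \<in> o[at 0](\<lambda>_. 1)"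
    using assms by (simp add: smallo_1_iff_tendsto_0)
  from landau_o.small.mult_left[OF this, of "\<lambda>u. u ^ j"] show ?thesis
    using assms by (simp add: power_add[symmetric])
qed

lemma bigo_id_imp_tendsto_0: "(f::real \<Rightarrow> real) \<in> O[at 0](\<lambda>u. u) \<Longrightarrow> (f \<longlongrightarrow> 0) (at 0)"
  using landau_o.big_small_trans[of f "at 0" "\<lambda>u. u" "\<lambda>_. 1"]
    power_smallo_power_at_0[of 0 1] by (simp add: smallo_1_iff_tendsto_0)

lemma smallo_power_tendsto_0: "(f::real \<Rightarrow> real) \<in> o[at 0](\<lambda>u. u ^ k) \<Longrightarrow> (f \<longlongrightarrow> 0) (at 0)"
  using landau_o.small_big_trans[of f "at 0" "\<lambda>u. u ^ k", OF _ power_bigo_power_at_0[of 0 k]]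
  by (simp add: smallo_1_iff_tendsto_0)

lemma tendsto_of_smallo_diff:
  "(\<lambda>u. f u - g u) \<in> o[at 0](\<lambda>u::real. u ^ k) \<Longrightarrow> (g \<longlongrightarrow> L) (at 0) \<Longrightarrow> (f \<longlongrightarrow> L) (at 0)"
  by (drule smallo_power_tendsto_0) (drule (1) tendsto_add, simp)

lemma monomial_smallo_imp_zero:
  assumes "(\<lambda>u::real. c * u ^ m) \<in> o[at 0](\<lambda>u. u ^ m)"
  shows "c = 0"
proof (rule ccontr)
  assume "c \<noteq> 0"
  with assms have "eventually (\<lambda>u::real. u ^ m = 0) (at 0)"
    by (simp add: landau_o.small_refl_iff)
  moreover have "eventually (\<lambda>u::real. u \<noteq> 0) (at 0)" by (simp add: eventually_at_filter)
  ultimately have "eventually (\<lambda>u::real. False) (at 0)" by eventually_elim simp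
  then show False by simp
qed

lemma smallo_compose_at_0:
  assumes "(r::real \<Rightarrow> real) \<in> o[at 0](\<lambda>w. w ^ m)" "r 0 = 0" "(w \<longlongrightarrow> 0) F"
  shows "(\<lambda>u. r (w u)) \<in> o[F](\<lambda>u. w u ^ m)"
proof -
  have "r \<in> o[nhds 0](\<lambda>w. w ^ m)"
  proof (rule landau_o.smallI)
    fix c :: real assume "c > 0"
    with landau_o.smallD[OF assms(1)] assms(2)
    show "eventually (\<lambda>x. norm (r x) \<le> c * norm (x ^ m)) (nhds 0)"
      by (simp add: eventually_nhds_conv_at)
  qed
  then show ?thesis
    by (rule landau_o.small.compose) (use assms(3) in \<open>simp add: filterlim_def\<close>)
qed

lemma filterlim_uminus_at_0: "filterlim (\<lambda>u::real. - u) (at 0) (at 0)"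
  unfolding filterlim_def filtermap_at_minus by simp

lemma smallo_at_0_reflect:
  "f \<in> o[at 0](g) \<Longrightarrow> (\<lambda>u::real. f (- u)) \<in> o[at 0](\<lambda>u. g (- u))"
  by (rule landau_o.small.compose[OF _ filterlim_uminus_at_0])

lemma bigo_at_0_reflect:
  "f \<in> O[at 0](g) \<Longrightarrow> (\<lambda>u::real. f (- u)) \<in> O[at 0](\<lambda>u. g (- u))"
  by (rule landau_o.big.compose[OF _ filterlim_uminus_at_0])

lemma power_diff_eq: "(w::real) ^ Suc m - v ^ Suc m = w * (w ^ m - v ^ m) + v ^ m * (w - v)"
  by (simp add: algebra_simps)

lemma power_diff_bigo_power:
  fixes w v :: "real \<Rightarrow> real"
  assumes "w \<in> O[F](\<lambda>u. u)" "v \<in> O[F](\<lambda>u. u)" "(\<lambda>u. w u - v u) \<in> O[F](\<lambda>u. u ^ 2)"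
  shows "(\<lambda>u. w u ^ m - v u ^ m) \<in> O[F](\<lambda>u. u ^ (m + 1))"
proof (induction m)
  case (Suc m)
  have "(\<lambda>u. w u * (w u ^ m - v u ^ m)) \<in> O[F](\<lambda>u. u * u ^ (m + 1))"
    by (rule landau_o.big_mult[OF assms(1) Suc.IH])
  moreover have "(\<lambda>u. v u ^ m * (w u - v u)) \<in> O[F](\<lambda>u. u ^ m * u ^ 2)"
    by (rule landau_o.big_mult[OF landau_o.big_power[OF assms(2)] assms(3)])
  ultimately show ?case
    unfolding power_diff_eq by (intro sum_in_bigo) (simp_all add: power2_eq_square mult_ac)
qed simp

lemma power_diff_bigo:
  fixes w v :: "'a \<Rightarrow> real"
  assumes w: "(w \<longlongrightarrow> 0) F" and v: "(v \<longlongrightarrow> 0) F" and wv: "(\<lambda>u. w u - v u) \<in> O[F](g)"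
  shows "(\<lambda>u. w u ^ m - v u ^ m) \<in> O[F](g)"
proof (induction m)
  case (Suc m)
  have "((\<lambda>u. v u ^ m) \<longlongrightarrow> 0 ^ m) F" by (rule tendsto_power[OF v])
  then show ?case unfolding power_diff_eq
    by (rule sum_in_bigo(1)[OF bigo_mult_bounded[OF bigo_1_of_tendsto[OF w] Suc.IH]
          bigo_mult_bounded[OF bigo_1_of_tendsto wv]])
qed simp

lemma power_diff_smallo:
  fixes w v :: "'a \<Rightarrow> real"
  assumes w: "(w \<longlongrightarrow> 0) F" and v: "(v \<longlongrightarrow> 0) F" and wv: "(\<lambda>u. w u - v u) \<in> O[F](g)"
    and "m \<ge> 2"
  shows "(\<lambda>u. w u ^ m - v u ^ m) \<in> o[F](g)"
proof -
  obtain j where j: "m = Suc j" "j \<ge> 1" using \<open>m \<ge> 2\<close> by (cases m) auto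
  have "((\<lambda>u. v u ^ j) \<longlongrightarrow> 0 ^ j) F" by (rule tendsto_power[OF v])
  then have "((\<lambda>u. v u ^ j) \<longlongrightarrow> 0) F" using j(2) by (simp add: power_0_left)
  then show ?thesis unfolding j(1) power_diff_eq
    by (rule sum_in_smallo(1)[OF smallo_mult_tendsto_0[OF w power_diff_bigo[OF w v wv]]
          smallo_mult_tendsto_0[OF _ wv]])
qed

section \<open>Profiles of homogeneous means\<close>

definition mean_profile :: "(real \<Rightarrow> real \<Rightarrow> real) \<Rightarrow> real \<Rightarrow> real" where
  "mean_profile X w = X (1 - w) (1 + w)"

definition spread :: "real \<Rightarrow> real \<Rightarrow> real" where
  "spread s t = (t - s) / (s + t)"

definition expandable_mean :: "(real \<Rightarrow> real \<Rightarrow> real) \<Rightarrow> (nat \<Rightarrow> real) \<Rightarrow> bool" where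
  "expandable_mean X a \<longleftrightarrow>
     is_mean X \<and> symmetric_mean X \<and> homogeneous_mean X \<and> sym_asymp_expansion X a"

lemma mean_diag: "is_mean X \<Longrightarrow> x > 0 \<Longrightarrow> X x x = x"
  unfolding is_mean_def by (metis min.idem max.idem order_antisym)

lemma mean_profile_0: "is_mean X \<Longrightarrow> mean_profile X 0 = 1"
  unfolding mean_profile_def using mean_diag[of X 1] by simp

lemma mean_profile_minus: "symmetric_mean X \<Longrightarrow> \<bar>w\<bar> < 1 \<Longrightarrow> mean_profile X (- w) = mean_profile X w"
  unfolding symmetric_mean_def mean_profile_def by auto

lemma mean_profile_pos:
  assumes "is_mean X" "\<bar>w\<bar> < 1" shows "mean_profile X w > 0"
proof -
  have "0 < min (1 - w) (1 + w)" using assms(2) by auto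
  also have "\<dots> \<le> mean_profile X w"
    using assms unfolding is_mean_def mean_profile_def by auto
  finally show ?thesis .
qed

lemma homogeneous_mean_eq_profile:
  assumes "homogeneous_mean X" "s > 0" "t > 0"
  shows "X s t = (s + t) / 2 * mean_profile X (spread s t)"
proof -
  define c where "c = (s + t) / 2"
  have "c > 0" using assms unfolding c_def by simp
  have "1 - spread s t = s / c" "1 + spread s t = t / c"
    using \<open>c > 0\<close> unfolding c_def spread_def by (simp_all add: field_simps)
  then have "X s t = X (c * (1 - spread s t)) (c * (1 + spread s t))"
    using \<open>c > 0\<close> by simp
  also have "\<dots> = c * mean_profile X (spread s t)"
    using assms(1)[unfolded homogeneous_mean_def, rule_format, of c "s / c" "t / c"]
      \<open>c > 0\<close> \<open>1 - spread s t = s / c\<close> \<open>1 + spread s t = t / c\<close> assms(2,3)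
    unfolding mean_profile_def by simp
  finally show ?thesis unfolding c_def .
qed

lemma tendsto_mean:
  assumes "is_mean X" "(p \<longlongrightarrow> 1) F" "(q \<longlongrightarrow> 1) F"
  shows "((\<lambda>u. X (p u) (q u)) \<longlongrightarrow> 1) F"
proof (rule tendsto_sandwich[of "\<lambda>u. min (p u) (q u)" _ _ "\<lambda>u. max (p u) (q u)"])
  have pos: "eventually (\<lambda>u. p u > 0 \<and> q u > 0) F"
    using eventually_pos_of_tendsto_1[OF assms(2)] eventually_pos_of_tendsto_1[OF assms(3)]
    by eventually_elim simp
  show "eventually (\<lambda>u. min (p u) (q u) \<le> X (p u) (q u)) F"
    using pos by eventually_elim (use assms(1) in \<open>simp add: is_mean_def\<close>)
  show "eventually (\<lambda>u. X (p u) (q u) \<le> max (p u) (q u)) F"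
    using pos by eventually_elim (use assms(1) in \<open>simp add: is_mean_def\<close>)
  show "((\<lambda>u. min (p u) (q u)) \<longlongrightarrow> 1) F" "((\<lambda>u. max (p u) (q u)) \<longlongrightarrow> 1) F"
    using tendsto_min[OF assms(2,3)] tendsto_max[OF assms(2,3)] by simp_all
qed

lemma tendsto_mean_profile: "is_mean X \<Longrightarrow> (mean_profile X \<longlongrightarrow> 1) (at 0)"
  unfolding mean_profile_def[abs_def] by (rule tendsto_mean) (auto intro!: tendsto_eq_intros)

lemma tendsto_spread:
  "(p \<longlongrightarrow> 1) F \<Longrightarrow> (q \<longlongrightarrow> 1) F \<Longrightarrow> ((\<lambda>u. spread (p u) (q u)) \<longlongrightarrow> 0) F"
  unfolding spread_def by (auto intro!: tendsto_eq_intros)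

lemma spread_bigo:
  assumes "(p \<longlongrightarrow> 1) F" "(q \<longlongrightarrow> 1) F" "(\<lambda>u. q u - p u) \<in> O[F](g)"
  shows "(\<lambda>u. spread (p u) (q u)) \<in> O[F](g)"
proof -
  have "((\<lambda>u. inverse (p u + q u)) \<longlongrightarrow> inverse (1 + 1)) F"
    using assms(1,2) by (auto intro!: tendsto_eq_intros)
  from bigo_mult_bounded[OF bigo_1_of_tendsto[OF this] assms(3)] show ?thesis
    unfolding spread_def by (simp add: divide_inverse_commute)
qed

lemma inverse_powr_odd:
  fixes w :: real assumes "w > 0"
  shows "inverse w powr (1 - 2 * real n) = inverse w * w ^ (2 * n)"
proof -
  have "w powr (1 - 2 * real n) = w / w ^ (2 * n)"
    using powr_diff[of w 1 "2 * real n"] powr_realpow[of w "2 * n"] assms by simp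
  then have "inverse w powr (1 - 2 * real n) = inverse (w / w ^ (2 * n))"
    by (simp only: inverse_powr)
  then show ?thesis using assms by (simp add: field_simps)
qed

text \<open>The substitution \<open>x = 1/w\<close> turns the expansion at infinity into one of the profile at \<open>0\<^sup>+\<close>.\<close>

lemma profile_expansion_at_right:
  assumes hom: "homogeneous_mean X" and ex: "sym_asymp_expansion X a"
  shows "(\<lambda>w. mean_profile X w - (\<Sum>n\<le>N. a n * w ^ (2 * n))) \<in> o[at_right 0](\<lambda>w. w ^ (2 * N))"
proof -
  define R where "R w = mean_profile X w - (\<Sum>n\<le>N. a n * w ^ (2 * n))" for w
  define g where "g x = X (x - 1) (x + 1) - (\<Sum>n\<le>N. a n * 1 ^ (2 * n) * x powr (1 - 2 * real n))"
    for x
  have "g \<in> o[at_top](\<lambda>x. x powr (1 - 2 * real N))"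
    using ex unfolding sym_asymp_expansion_def g_def by (metis (no_types, lifting) ext)
  from landau_o.small.compose[OF this filterlim_inverse_at_top_right]
  have gw: "(\<lambda>w. g (inverse w)) \<in> o[at_right 0](\<lambda>w. inverse w powr (1 - 2 * real N))" .
  have e1: "eventually (\<lambda>w. g (inverse w) = inverse w * R w) (at_right 0)"
    using eventually_at_right_0_lt_1
  proof eventually_elim
    case (elim w)
    have "X (inverse w - 1) (inverse w + 1) = X (inverse w * (1 - w)) (inverse w * (1 + w))"
      using elim by (simp add: field_simps)
    also have "\<dots> = inverse w * mean_profile X w"
      using hom elim unfolding homogeneous_mean_def mean_profile_def by simp
    moreover have "(\<Sum>n\<le>N. a n * 1 ^ (2 * n) * inverse w powr (1 - 2 * real n))
        = inverse w * (\<Sum>n\<le>N. a n * w ^ (2 * n))"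
      unfolding sum_distrib_left using elim by (intro sum.cong) (simp_all add: inverse_powr_odd)
    ultimately show ?case by (simp add: g_def R_def algebra_simps)
  qed
  have e2: "eventually (\<lambda>w::real. inverse w powr (1 - 2 * real N) = inverse w * w ^ (2 * N))
      (at_right 0)"
    using eventually_at_right_0_lt_1 by eventually_elim (simp add: inverse_powr_odd)
  have "(\<lambda>w. inverse w * R w) \<in> o[at_right 0](\<lambda>w. inverse w * w ^ (2 * N))"
    using gw landau_o.small.in_cong[OF e1] landau_o.small.cong[OF e2] by simp
  from landau_o.small.mult_left[OF this, of "\<lambda>w. w"]
  have m: "(\<lambda>w. w * (inverse w * R w)) \<in> o[at_right 0](\<lambda>w. w * (inverse w * w ^ (2 * N)))" .
  have e3: "eventually (\<lambda>w. w * (inverse w * R w) = R w) (at_right 0)"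
    using eventually_at_right_0_lt_1 by eventually_elim simp
  have e4: "eventually (\<lambda>w::real. w * (inverse w * w ^ (2 * N)) = w ^ (2 * N)) (at_right 0)"
    using eventually_at_right_0_lt_1 by eventually_elim simp
  have "R \<in> o[at_right 0](\<lambda>w. w ^ (2 * N))"
    using m landau_o.small.in_cong[OF e3] landau_o.small.cong[OF e4] by simp
  then show ?thesis unfolding R_def[abs_def] .
qed

lemma profile_expansion:
  assumes "expandable_mean X a"
  shows "(\<lambda>w. mean_profile X w - (\<Sum>n\<le>N. a n * w ^ (2 * n))) \<in> o[at 0](\<lambda>w. w ^ (2 * N))"
proof -
  define R where "R w = mean_profile X w - (\<Sum>n\<le>N. a n * w ^ (2 * n))" for w
  have right: "R \<in> o[at_right 0](\<lambda>w. w ^ (2 * N))"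
    using profile_expansion_at_right assms unfolding expandable_mean_def R_def[abs_def] by blast
  have "eventually (\<lambda>w. R (- w) = R w) (at_right 0)"
    using eventually_at_right_0_lt_1
    by eventually_elim (use assms in \<open>simp add: R_def mean_profile_minus expandable_mean_def\<close>)
  then have "(\<lambda>w. R (- w)) \<in> o[at_right 0](\<lambda>w. (- w) ^ (2 * N))"
    using right landau_o.small.in_cong[of "\<lambda>w. R (- w)" R] by (simp add: power_mult)
  then have "R \<in> o[at_left 0](\<lambda>w. w ^ (2 * N))"
    using landau_o.small.in_filtermap_iff[of R uminus "at_right 0" "\<lambda>w. w ^ (2 * N)"]
    by (simp add: at_left_minus)
  from landau_o.small.sup[OF this right] show ?thesis
    unfolding R_def[abs_def] by (simp add: at_eq_sup_left_right[symmetric])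
qed

lemma expandable_mean_coeff_0:
  assumes "expandable_mean X a" shows "a 0 = 1"
proof -
  from profile_expansion[OF assms, of 0]
  have "((\<lambda>w. mean_profile X w - a 0) \<longlongrightarrow> 0) (at 0)"
    by (simp add: smallo_1_iff_tendsto_0)
  then have "(mean_profile X \<longlongrightarrow> a 0) (at 0)" by (simp add: LIM_zero_iff)
  moreover have "(mean_profile X \<longlongrightarrow> 1) (at 0)"
    using assms tendsto_mean_profile unfolding expandable_mean_def by blast
  ultimately show ?thesis by (rule tendsto_unique[OF at_neq_bot])
qed

lemma even_power_sum_at_0: "(\<Sum>n\<le>N. a n * (0::real) ^ (2 * n)) = a 0"
  by (induction N) auto

lemma mean_expansion_along:
  assumes X: "expandable_mean X a" and p: "(p \<longlongrightarrow> 1) F" and q: "(q \<longlongrightarrow> 1) F"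
  shows "(\<lambda>u. X (p u) (q u) - (p u + q u) / 2 * (\<Sum>n\<le>N. a n * spread (p u) (q u) ^ (2 * n)))
           \<in> o[F](\<lambda>u. spread (p u) (q u) ^ (2 * N))"
proof -
  define R where "R w = mean_profile X w - (\<Sum>n\<le>N. a n * w ^ (2 * n))" for w
  have "R \<in> o[at 0](\<lambda>w. w ^ (2 * N))"
    using profile_expansion[OF X] unfolding R_def[abs_def] .
  moreover have "R 0 = 0"
    using X expandable_mean_coeff_0[OF X] mean_profile_0
    unfolding R_def expandable_mean_def by (simp add: even_power_sum_at_0)
  ultimately have r: "(\<lambda>u. R (spread (p u) (q u))) \<in> o[F](\<lambda>u. spread (p u) (q u) ^ (2 * N))"
    using tendsto_spread[OF p q] by (rule smallo_compose_at_0)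
  have c: "((\<lambda>u. (p u + q u) / 2) \<longlongrightarrow> 1) F"
    using p q by (auto intro!: tendsto_eq_intros)
  have cr: "(\<lambda>u. (p u + q u) / 2 * R (spread (p u) (q u)))
      \<in> o[F](\<lambda>u. spread (p u) (q u) ^ (2 * N))"
    by (rule smallo_mult_bounded[OF bigo_1_of_tendsto[OF c] r])
  have "eventually (\<lambda>u. (p u + q u) / 2 * R (spread (p u) (q u)) =
      X (p u) (q u) - (p u + q u) / 2 * (\<Sum>n\<le>N. a n * spread (p u) (q u) ^ (2 * n))) F"
    using eventually_pos_of_tendsto_1[OF p] eventually_pos_of_tendsto_1[OF q]
  proof eventually_elim
    case (elim u)
    with X have "X (p u) (q u) = (p u + q u) / 2 * mean_profile X (spread (p u) (q u))"
      by (simp add: homogeneous_mean_eq_profile expandable_mean_def)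
    then show ?case by (simp add: R_def right_diff_distrib)
  qed
  from landau_o.small.in_cong[OF this] cr show ?thesis by simp
qed

lemma profile_minus_1_bigo:
  assumes "expandable_mean X a" shows "(\<lambda>u. mean_profile X u - 1) \<in> O[at 0](\<lambda>u. u ^ 2)"
proof -
  have "(\<lambda>u. (mean_profile X u - (\<Sum>n\<le>1. a n * u ^ (2 * n))) + a 1 * u ^ 2) \<in> O[at 0](\<lambda>u. u ^ 2)"
    by (rule sum_in_bigo(1)[OF landau_o.small_imp_big])
      (use profile_expansion[OF assms, of 1] in simp_all)
  then show ?thesis using expandable_mean_coeff_0[OF assms] by simp
qed

section \<open>Means along curves through \<open>(1, 1)\<close>\<close>

definition near_one :: "(real \<Rightarrow> real) \<Rightarrow> bool" where
  "near_one p \<longleftrightarrow> (\<lambda>u. p u - 1) \<in> O[at 0](\<lambda>u. u)"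

lemma near_one_tendsto: "near_one p \<Longrightarrow> (p \<longlongrightarrow> 1) (at 0)"
  unfolding near_one_def by (drule bigo_id_imp_tendsto_0) (simp add: LIM_zero_iff)

lemma near_one_diff: "near_one p \<Longrightarrow> near_one q \<Longrightarrow> (\<lambda>u. q u - p u) \<in> O[at 0](\<lambda>u. u)"
  unfolding near_one_def by (drule (1) sum_in_bigo(2)) simp

lemma near_one_plus_bigo:
  assumes "near_one p" "(\<lambda>u. q u - p u) \<in> O[at 0](\<lambda>u. u ^ k)" "k \<ge> 1"
  shows "near_one q"
proof -
  have "(\<lambda>u. q u - p u) \<in> O[at 0](\<lambda>u. u)"
    using landau_o.big_trans[OF assms(2) power_bigo_power_at_0[OF assms(3)]] by simp
  with assms(1) have "(\<lambda>u. (p u - 1) + (q u - p u)) \<in> O[at 0](\<lambda>u. u)"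
    unfolding near_one_def by (rule sum_in_bigo(1))
  then show ?thesis unfolding near_one_def by simp
qed

lemma near_one_1_plus: "near_one (\<lambda>u. 1 + u)"
  unfolding near_one_def by simp

lemma near_one_profile: "expandable_mean X a \<Longrightarrow> near_one (mean_profile X)"
  using near_one_plus_bigo[of "\<lambda>_. 1" "mean_profile X" 2] profile_minus_1_bigo
  by (simp add: near_one_def)

lemma near_one_reflect: "near_one p \<Longrightarrow> near_one (\<lambda>u. p (- u))"
  unfolding near_one_def by (drule bigo_at_0_reflect) simp

lemma near_one_midpoint: "near_one p \<Longrightarrow> near_one q \<Longrightarrow> near_one (\<lambda>u. (p u + q u) / 2)"
  unfolding near_one_def by (drule (1) sum_in_bigo(1)) (simp add: field_simps)

lemma mean_expansion_along_at_0:
  assumes X: "expandable_mean X a" and p: "near_one p" and q: "near_one q"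
  shows "(\<lambda>u. X (p u) (q u) - (p u + q u) / 2 * (\<Sum>k\<le>n. a k * spread (p u) (q u) ^ (2 * k)))
           \<in> o[at 0](\<lambda>u. u ^ (2 * n))"
proof -
  have "(\<lambda>u. spread (p u) (q u)) \<in> O[at 0](\<lambda>u. u)"
    using near_one_tendsto[OF p] near_one_tendsto[OF q] near_one_diff[OF p q] by (rule spread_bigo)
  from landau_o.big_power[OF this, of "2 * n"]
  show ?thesis
    by (rule landau_o.small_big_trans[OF mean_expansion_along[OF X near_one_tendsto[OF p]
          near_one_tendsto[OF q]]])
qed

lemma mean_minus_midpoint_bigo:
  assumes X: "expandable_mean X a" and "near_one p" "near_one q"
  shows "(\<lambda>u. X (p u) (q u) - (p u + q u) / 2) \<in> O[at 0](\<lambda>u::real. u ^ 2)"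
proof -
  define w where "w u = spread (p u) (q u)" for u
  have "(\<lambda>u. spread (p u) (q u)) \<in> O[at 0](\<lambda>u. u)"
    using assms(2,3) by (intro spread_bigo near_one_tendsto near_one_diff)
  then have w2: "(\<lambda>u. w u ^ 2) \<in> O[at 0](\<lambda>u. u ^ 2)"
    unfolding w_def by (rule landau_o.big_power)
  from near_one_tendsto[OF near_one_midpoint[OF assms(2,3)]]
  have "(\<lambda>u. (p u + q u) / 2 * (a 1 * w u ^ 2)) \<in> O[at 0](\<lambda>u. u ^ 2)"
    by (rule bigo_mult_bounded[OF bigo_1_of_tendsto]) (use w2 in simp)
  with landau_o.small_imp_big[OF mean_expansion_along_at_0[OF assms, of 1]]
  have "(\<lambda>u. (X (p u) (q u) - (p u + q u) / 2 * (\<Sum>k\<le>1. a k * w u ^ (2 * k)))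
      + (p u + q u) / 2 * (a 1 * w u ^ 2)) \<in> O[at 0](\<lambda>u. u ^ 2)"
    unfolding w_def by (intro sum_in_bigo(1)) simp_all
  then show ?thesis
    using expandable_mean_coeff_0[OF X] by (simp add: algebra_simps power2_eq_square)
qed

lemma spread_diff_eq:
  "s + t \<noteq> 0 \<Longrightarrow> s' + t' \<noteq> 0 \<Longrightarrow>
    spread s t - spread s' t' = 2 / ((s + t) * (s' + t')) * (s' * (t - t') - t' * (s - s'))"
  unfolding spread_def by (simp add: field_simps)

lemma spread_diff_bigo:
  assumes p: "near_one p" and q: "near_one q" and p': "near_one p'" and q': "near_one q'"
    and pp: "(\<lambda>u. p u - p' u) \<in> O[at 0](g)" and qq: "(\<lambda>u. q u - q' u) \<in> O[at 0](g)"
  shows "(\<lambda>u. spread (p u) (q u) - spread (p' u) (q' u)) \<in> O[at 0](g)"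
proof -
  note lim = near_one_tendsto[OF p] near_one_tendsto[OF q]
    near_one_tendsto[OF p'] near_one_tendsto[OF q']
  have "((\<lambda>u. 2 / ((p u + q u) * (p' u + q' u))) \<longlongrightarrow> 2 / ((1 + 1) * (1 + 1))) (at 0)"
    using lim by (intro tendsto_intros) simp_all
  moreover have "(\<lambda>u. p' u * (q u - q' u) - q' u * (p u - p' u)) \<in> O[at 0](g)"
    by (rule sum_in_bigo(2)[OF bigo_mult_bounded[OF bigo_1_of_tendsto[OF lim(3)] qq]
          bigo_mult_bounded[OF bigo_1_of_tendsto[OF lim(4)] pp]])
  ultimately have bound: "(\<lambda>u. 2 / ((p u + q u) * (p' u + q' u))
      * (p' u * (q u - q' u) - q' u * (p u - p' u))) \<in> O[at 0](g)"
    by (rule bigo_mult_bounded[OF bigo_1_of_tendsto])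
  have "eventually (\<lambda>u. p u > 0 \<and> q u > 0 \<and> p' u > 0 \<and> q' u > 0) (at 0)"
    using lim by (intro eventually_conj eventually_pos_of_tendsto_1)
  then have "eventually (\<lambda>u. 2 / ((p u + q u) * (p' u + q' u))
      * (p' u * (q u - q' u) - q' u * (p u - p' u)) = spread (p u) (q u) - spread (p' u) (q' u))
      (at 0)"
    by eventually_elim (simp add: spread_diff_eq)
  from landau_o.big.in_cong[OF this] bound show ?thesis by simp
qed

lemma even_power_sum_diff_smallo:
  fixes w w' :: "'a \<Rightarrow> real"
  assumes "(w \<longlongrightarrow> 0) F" "(w' \<longlongrightarrow> 0) F" "(\<lambda>u. w u - w' u) \<in> O[F](g)"
  shows "(\<lambda>u. (\<Sum>k\<le>n. a k * w u ^ (2 * k)) - (\<Sum>k\<le>n. a k * w' u ^ (2 * k))) \<in> o[F](g)"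
proof -
  have "(\<lambda>u. \<Sum>k\<le>n. a k * (w u ^ (2 * k) - w' u ^ (2 * k))) \<in> o[F](g)"
  proof (rule big_sum_in_smallo)
    fix k
    show "(\<lambda>u. a k * (w u ^ (2 * k) - w' u ^ (2 * k))) \<in> o[F](g)"
    proof (cases "k = 0")
      case False
      then have "2 * k \<ge> 2" by simp
      from power_diff_smallo[OF assms this] show ?thesis
        by (rule smallo_mult_bounded[OF bigo_const])
    qed simp
  qed
  then show ?thesis by (simp add: sum_subtractf right_diff_distrib)
qed

text \<open>To order \<open>u\<^sup>2\<^sup>n\<close>, perturbing both arguments of a mean by \<open>O(u\<^sup>2\<^sup>n)\<close> shifts it
  by the arithmetic mean of the perturbations: the profile is flat to first order.\<close>

lemma mean_perturbation:
  assumes X: "expandable_mean X a"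
    and p: "near_one p" and q: "near_one q" and p': "near_one p'" and q': "near_one q'"
    and pp: "(\<lambda>u. p u - p' u) \<in> O[at 0](\<lambda>u. u ^ (2 * n))"
    and qq: "(\<lambda>u. q u - q' u) \<in> O[at 0](\<lambda>u. u ^ (2 * n))"
  shows "(\<lambda>u. X (p u) (q u) - X (p' u) (q' u) - ((p u - p' u) + (q u - q' u)) / 2)
           \<in> o[at 0](\<lambda>u::real. u ^ (2 * n))"
proof -
  define c c' w w' where "c u = (p u + q u) / 2" and "c' u = (p' u + q' u) / 2"
    and "w u = spread (p u) (q u)" and "w' u = spread (p' u) (q' u)" for u
  define S where "S x = (\<Sum>k\<le>n. a k * x ^ (2 * k))" for x :: real
  have w0: "(w \<longlongrightarrow> 0) (at 0)" "(w' \<longlongrightarrow> 0) (at 0)"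
    unfolding w_def w'_def using p q p' q' by (auto intro: tendsto_spread near_one_tendsto)
  have "(\<lambda>u. S (w u) - S (w' u)) \<in> o[at 0](\<lambda>u. u ^ (2 * n))"
    unfolding S_def w_def w'_def
    by (rule even_power_sum_diff_smallo[OF w0[unfolded w_def w'_def]
          spread_diff_bigo[OF p q p' q' pp qq]])
  with near_one_tendsto[OF near_one_midpoint[OF p q]]
  have main: "(\<lambda>u. c u * (S (w u) - S (w' u))) \<in> o[at 0](\<lambda>u. u ^ (2 * n))"
    unfolding c_def by (rule smallo_mult_bounded[OF bigo_1_of_tendsto])
  have "((\<lambda>u. S (w' u) - 1) \<longlongrightarrow> S 0 - 1) (at 0)"
    unfolding S_def by (intro tendsto_intros w0)
  then have "((\<lambda>u. S (w' u) - 1) \<longlongrightarrow> 0) (at 0)"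
    using expandable_mean_coeff_0[OF X] by (simp add: S_def even_power_sum_at_0)
  moreover have "(\<lambda>u. ((p u - p' u) + (q u - q' u)) / 2) \<in> O[at 0](\<lambda>u. u ^ (2 * n))"
    using sum_in_bigo(1)[OF pp qq] by simp
  then have "(\<lambda>u. c u - c' u) \<in> O[at 0](\<lambda>u. u ^ (2 * n))"
    unfolding c_def c'_def by (simp add: diff_divide_distrib algebra_simps)
  ultimately have "(\<lambda>u. (S (w' u) - 1) * (c u - c' u)) \<in> o[at 0](\<lambda>u. u ^ (2 * n))"
    by (rule smallo_mult_tendsto_0)
  from sum_in_smallo(1)[OF main this]
    sum_in_smallo(2)[OF mean_expansion_along_at_0[OF X p q, of n]
      mean_expansion_along_at_0[OF X p' q', of n]]
  have "(\<lambda>u. (X (p u) (q u) - c u * S (w u)) - (X (p' u) (q' u) - c' u * S (w' u))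
      + (c u * (S (w u) - S (w' u)) + (S (w' u) - 1) * (c u - c' u))) \<in> o[at 0](\<lambda>u. u ^ (2 * n))"
    unfolding c_def c'_def w_def w'_def S_def by (rule sum_in_smallo(1)[rotated])
  moreover have "(\<lambda>u. (X (p u) (q u) - c u * S (w u)) - (X (p' u) (q' u) - c' u * S (w' u))
      + (c u * (S (w u) - S (w' u)) + (S (w' u) - 1) * (c u - c' u)))
    = (\<lambda>u. X (p u) (q u) - X (p' u) (q' u) - ((p u - p' u) + (q u - q' u)) / 2)"
    by (rule ext) (simp add: c_def c'_def field_simps)
  ultimately show ?thesis by simp
qed

lemma spread_minus_half_bigo:
  assumes p: "near_one p" and q: "near_one q" and d: "(\<lambda>u. q u - p u - u) \<in> O[at 0](\<lambda>u. u ^ 2)"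
  shows "(\<lambda>u. spread (p u) (q u) - u / 2) \<in> O[at 0](\<lambda>u. u ^ 2)"
proof -
  have "((\<lambda>u. 1 / (2 * (p u + q u))) \<longlongrightarrow> 1 / (2 * (1 + 1))) (at 0)"
    using near_one_tendsto[OF p] near_one_tendsto[OF q] by (intro tendsto_intros) simp_all
  moreover have "(\<lambda>u. (p u - 1) + (q u - 1)) \<in> O[at 0](\<lambda>u. u)"
    using p q unfolding near_one_def by (rule sum_in_bigo(1))
  from landau_o.big.mult_left[OF this, of "\<lambda>u. u"]
  have "(\<lambda>u. u * ((p u - 1) + (q u - 1))) \<in> O[at 0](\<lambda>u. u ^ 2)" by (simp add: power2_eq_square)
  with d landau_o.big.cmult_in_iff[of 2 "\<lambda>u. q u - p u - u"]
  have "(\<lambda>u. 2 * (q u - p u - u) - u * ((p u - 1) + (q u - 1))) \<in> O[at 0](\<lambda>u. u ^ 2)"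
    by (intro sum_in_bigo(2)) simp_all
  ultimately have bound: "(\<lambda>u. 1 / (2 * (p u + q u))
      * (2 * (q u - p u - u) - u * ((p u - 1) + (q u - 1)))) \<in> O[at 0](\<lambda>u. u ^ 2)"
    by (rule bigo_mult_bounded[OF bigo_1_of_tendsto])
  have "eventually (\<lambda>u. p u > 0 \<and> q u > 0) (at 0)"
    using p q by (intro eventually_conj eventually_pos_of_tendsto_1 near_one_tendsto)
  then have "eventually (\<lambda>u. 1 / (2 * (p u + q u))
      * (2 * (q u - p u - u) - u * ((p u - 1) + (q u - 1))) = spread (p u) (q u) - u / 2) (at 0)"
    by eventually_elim (simp add: spread_def field_simps)
  from landau_o.big.in_cong[OF this] bound show ?thesis by simp
qed

lemma sum_diff_of_agree_below:
  fixes a b x :: "nat \<Rightarrow> real"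
  assumes "\<forall>k<n. a k = b k"
  shows "(\<Sum>k\<le>n. a k * x k) - (\<Sum>k\<le>n. b k * x k) = (a n - b n) * x n"
proof (cases n)
  case (Suc m)
  have "(\<Sum>k\<le>m. a k * x k) = (\<Sum>k\<le>m. b k * x k)" using assms Suc by (intro sum.cong) auto
  then show ?thesis using Suc by (simp add: algebra_simps)
qed (simp add: algebra_simps)

lemma mean_difference:
  assumes X: "expandable_mean X a" and Y: "expandable_mean Y b" and agree: "\<forall>k<n. a k = b k"
    and p: "near_one p" and q: "near_one q" and d: "(\<lambda>u. q u - p u - u) \<in> O[at 0](\<lambda>u. u ^ 2)"
  shows "(\<lambda>u. X (p u) (q u) - Y (p u) (q u) - (a n - b n) * (u / 2) ^ (2 * n))
           \<in> o[at 0](\<lambda>u::real. u ^ (2 * n))"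
proof -
  define c w where "c u = (p u + q u) / 2" and "w u = spread (p u) (q u)" for u
  have wu: "(\<lambda>u. w u - u / 2) \<in> O[at 0](\<lambda>u. u ^ 2)"
    unfolding w_def by (rule spread_minus_half_bigo[OF p q d])
  have wO: "w \<in> O[at 0](\<lambda>u. u)"
    unfolding w_def using p q by (intro spread_bigo near_one_tendsto near_one_diff)
  have "(\<lambda>u. w u ^ (2 * n) - (u / 2) ^ (2 * n)) \<in> O[at 0](\<lambda>u. u ^ (2 * n + 1))"
    by (rule power_diff_bigo_power[OF wO _ wu]) simp
  then have P1: "(\<lambda>u. w u ^ (2 * n) - (u / 2) ^ (2 * n)) \<in> o[at 0](\<lambda>u. u ^ (2 * n))"
    by (rule landau_o.big_small_trans[OF _ power_smallo_power_at_0]) simp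
  have "((\<lambda>u. c u - 1) \<longlongrightarrow> 0) (at 0)"
    using near_one_tendsto[OF near_one_midpoint[OF p q]] unfolding c_def by (simp add: LIM_zero)
  from smallo_mult_tendsto_0[OF this landau_o.big_power[OF wO]]
  have P2: "(\<lambda>u. (c u - 1) * w u ^ (2 * n)) \<in> o[at 0](\<lambda>u. u ^ (2 * n))" .
  from sum_in_smallo(1)[OF P2 P1]
  have "(\<lambda>u. (a n - b n) * ((c u - 1) * w u ^ (2 * n) + (w u ^ (2 * n) - (u / 2) ^ (2 * n))))
      \<in> o[at 0](\<lambda>u. u ^ (2 * n))"
    by (rule smallo_mult_bounded[OF bigo_const])
  with sum_in_smallo(2)[OF mean_expansion_along_at_0[OF X p q, of n]
      mean_expansion_along_at_0[OF Y p q, of n]]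
  have "(\<lambda>u. (X (p u) (q u) - c u * (\<Sum>k\<le>n. a k * w u ^ (2 * k)))
      - (Y (p u) (q u) - c u * (\<Sum>k\<le>n. b k * w u ^ (2 * k)))
      + (a n - b n) * ((c u - 1) * w u ^ (2 * n) + (w u ^ (2 * n) - (u / 2) ^ (2 * n))))
      \<in> o[at 0](\<lambda>u. u ^ (2 * n))"
    unfolding c_def w_def by (rule sum_in_smallo(1))
  moreover have "(\<Sum>k\<le>n. a k * w u ^ (2 * k)) - (\<Sum>k\<le>n. b k * w u ^ (2 * k))
      = (a n - b n) * w u ^ (2 * n)" for u
    using sum_diff_of_agree_below[OF agree, of "\<lambda>k. w u ^ (2 * k)"] .
  then have "c u * (\<Sum>k\<le>n. a k * w u ^ (2 * k)) - c u * (\<Sum>k\<le>n. b k * w u ^ (2 * k))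
      = c u * ((a n - b n) * w u ^ (2 * n))" for u
    by (metis right_diff_distrib)
  ultimately show ?thesis by (simp add: algebra_simps)
qed

lemma mean_difference_expansion:
  assumes X: "expandable_mean X a" and Y: "expandable_mean Y b" and agree: "\<forall>k<n. a k = b k"
    and "n \<ge> 1" and p': "near_one p'" and q': "near_one q'"
    and d: "(\<lambda>u. q' u - p' u - u) \<in> O[at 0](\<lambda>u. u ^ 2)"
    and pp: "(\<lambda>u. p u - p' u) \<in> O[at 0](\<lambda>u. u ^ (2 * n))"
    and qq: "(\<lambda>u. q u - q' u) \<in> O[at 0](\<lambda>u. u ^ (2 * n))"
  shows "(\<lambda>u. X (p u) (q u) - Y (p' u) (q' u) - ((p u - p' u) + (q u - q' u)) / 2
           - (a n - b n) * (u / 2) ^ (2 * n)) \<in> o[at 0](\<lambda>u::real. u ^ (2 * n))"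
proof -
  have "near_one p" "near_one q"
    using near_one_plus_bigo[OF p' pp] near_one_plus_bigo[OF q' qq] \<open>n \<ge> 1\<close> by simp_all
  from sum_in_smallo(1)[OF mean_perturbation[OF X this p' q' pp qq]
      mean_difference[OF X Y agree p' q' d]]
  show ?thesis by (rule smallo_congI) (simp add: algebra_simps)
qed

section \<open>Stable means with equal first coefficients\<close>

lemma half_step_estimates:
  assumes "expandable_mean X a"
  shows "near_one (\<lambda>u. X (mean_profile X u) (1 + u))"
    and "(\<lambda>u. X (mean_profile X u) (1 + u) - X (mean_profile X (- u)) (1 - u) - u)
           \<in> O[at 0](\<lambda>u::real. u ^ 2)"
proof -
  define B where "B u = X (mean_profile X u) (1 + u)" for u
  from mean_minus_midpoint_bigo[OF assms near_one_profile[OF assms] near_one_1_plus]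
    profile_minus_1_bigo[OF assms]
  have "(\<lambda>u. (B u - (mean_profile X u + (1 + u)) / 2) + (mean_profile X u - 1) / 2)
      \<in> O[at 0](\<lambda>u::real. u ^ 2)"
    unfolding B_def by (intro sum_in_bigo(1)) simp_all
  then have GB: "(\<lambda>u. B u - (1 + u / 2)) \<in> O[at 0](\<lambda>u. u ^ 2)"
    by (rule bigo_congI) (simp add: field_simps)
  show "near_one (\<lambda>u. X (mean_profile X u) (1 + u))"
    using near_one_plus_bigo[OF _ GB] unfolding B_def by (simp add: near_one_def)
  have "(\<lambda>u. B (- u) - (1 + (- u) / 2)) \<in> O[at 0](\<lambda>u. u ^ 2)"
    using bigo_at_0_reflect[OF GB] by simp
  from sum_in_bigo(2)[OF GB this]
  show "(\<lambda>u. X (mean_profile X u) (1 + u) - X (mean_profile X (- u)) (1 - u) - u)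
      \<in> O[at 0](\<lambda>u. u ^ 2)"
    by (rule bigo_congI) (simp add: B_def algebra_simps)
qed

lemma profile_difference:
  assumes K: "expandable_mean K aK" and N: "expandable_mean N aN" and agree: "\<forall>k<n. aK k = aN k"
  shows "(\<lambda>u. mean_profile K u - mean_profile N u - (aK n - aN n) * u ^ (2 * n))
           \<in> o[at 0](\<lambda>u. u ^ (2 * n))"
proof -
  have "(\<lambda>u. (mean_profile K u - (\<Sum>k\<le>n. aK k * u ^ (2 * k)))
      - (mean_profile N u - (\<Sum>k\<le>n. aN k * u ^ (2 * k))))
    = (\<lambda>u. mean_profile K u - mean_profile N u - (aK n - aN n) * u ^ (2 * n))"
    using sum_diff_of_agree_below[OF agree, of "\<lambda>k. u ^ (2 * k)" for u]
    by (intro ext) (simp add: algebra_simps)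
  with sum_in_smallo(2)[OF profile_expansion[OF K, of n] profile_expansion[OF N, of n]]
  show ?thesis by simp
qed

lemma half_step_difference:
  assumes K: "expandable_mean K aK" and N: "expandable_mean N aN" and agree: "\<forall>k<n. aK k = aN k"
    and "n \<ge> 1"
  shows "(\<lambda>u. K (mean_profile K u) (1 + u) - N (mean_profile N u) (1 + u)
           - (aK n - aN n) * (u ^ (2 * n) / 2 + (u / 2) ^ (2 * n))) \<in> o[at 0](\<lambda>u::real. u ^ (2 * n))"
proof -
  note profiles = profile_difference[OF K N agree]
  have "(\<lambda>u. mean_profile K u - mean_profile N u) \<in> O[at 0](\<lambda>u. u ^ (2 * n))"
    using sum_in_bigo(1)[OF landau_o.small_imp_big[OF profiles], of "\<lambda>u. (aK n - aN n) * u ^ (2 * n)"]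
    by simp
  moreover have "(\<lambda>u. 1 + u - mean_profile N u - u) \<in> O[at 0](\<lambda>u. u ^ 2)"
    using landau_o.big.uminus_in_iff[THEN iffD2, OF profile_minus_1_bigo[OF N]] by simp
  ultimately have "(\<lambda>u. K (mean_profile K u) (1 + u) - N (mean_profile N u) (1 + u)
      - ((mean_profile K u - mean_profile N u) + 0) / 2 - (aK n - aN n) * (u / 2) ^ (2 * n))
      \<in> o[at 0](\<lambda>u. u ^ (2 * n))"
    using mean_difference_expansion[OF K N agree \<open>n \<ge> 1\<close> near_one_profile[OF N] near_one_1_plus,
        of "mean_profile K" "\<lambda>u. 1 + u"] by simp
  from sum_in_smallo(1)[OF this smallo_mult_bounded[OF bigo_const[of "1/2"] profiles]]
  show ?thesis by (rule smallo_congI) (simp add: field_simps)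
qed

lemma eventually_stable_profile_eq:
  assumes "expandable_mean X a" "stable_mean X"
  shows "eventually (\<lambda>u. X (X (mean_profile X (- u)) (1 - u)) (X (mean_profile X u) (1 + u))
    = mean_profile X u) (at 0)"
  using eventually_abs_less_1_at_0
proof eventually_elim
  case (elim u)
  have mean: "is_mean X" and sym: "symmetric_mean X"
    using assms(1) unfolding expandable_mean_def by auto
  have "0 < 1 - u" "0 < 1 + u" "0 < mean_profile X u"
    using elim mean_profile_pos[OF mean elim] by auto
  then have "X (1 - u) (mean_profile X u) = X (mean_profile X (- u)) (1 - u)"
    using sym mean_profile_minus[OF sym elim] unfolding symmetric_mean_def by simp
  with assms(2) \<open>0 < 1 - u\<close> \<open>0 < 1 + u\<close> show ?case
    unfolding stable_mean_def mean_profile_def by metis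
qed

lemma stable_coeff_step:
  assumes K: "expandable_mean K aK" and N: "expandable_mean N aN"
    and "stable_mean K" "stable_mean N" and agree: "\<forall>k<n. aK k = aN k" and "n \<ge> 2"
  shows "aK n = aN n"
proof -
  define \<alpha> m where "\<alpha> = aK n - aN n" and "m = 2 * n"
  define BK BN where "BK u = K (mean_profile K u) (1 + u)" and "BN u = N (mean_profile N u) (1 + u)"
    for u
  have "even m" unfolding m_def by simp
  have hB: "(\<lambda>u. BK u - BN u - \<alpha> * (u ^ m / 2 + (u / 2) ^ m)) \<in> o[at 0](\<lambda>u. u ^ m)"
    using half_step_difference[OF K N agree] \<open>n \<ge> 2\<close> unfolding BK_def BN_def \<alpha>_def m_def by simp
  from smallo_at_0_reflect[OF this] \<open>even m\<close>
  have hB': "(\<lambda>u. BK (- u) - BN (- u) - \<alpha> * (u ^ m / 2 + (u / 2) ^ m)) \<in> o[at 0](\<lambda>u. u ^ m)"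
    by (simp add: power_minus_even)
  have "(\<lambda>u. (\<alpha> * (1 / 2 + 1 / 2 ^ m)) * u ^ m) \<in> O[at 0](\<lambda>u. u ^ m)" by simp
  from sum_in_bigo(1)[OF landau_o.small_imp_big[OF hB] this]
  have BO: "(\<lambda>u. BK u - BN u) \<in> O[at 0](\<lambda>u. u ^ m)"
    by (rule bigo_congI) (simp add: power_divide field_simps)
  have nB: "near_one BN" and d: "(\<lambda>u. BN u - BN (- u) - u) \<in> O[at 0](\<lambda>u. u ^ 2)"
    using half_step_estimates[OF N] unfolding BN_def by simp_all
  from mean_difference_expansion[OF K N agree _ near_one_reflect[OF nB] nB d,
      of "\<lambda>u. BK (- u)" BK] \<open>n \<ge> 2\<close> bigo_at_0_reflect[OF BO] BO \<open>even m\<close>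
  have hK: "(\<lambda>u. K (BK (- u)) (BK u) - N (BN (- u)) (BN u)
      - ((BK (- u) - BN (- u)) + (BK u - BN u)) / 2 - \<alpha> * (u / 2) ^ m) \<in> o[at 0](\<lambda>u. u ^ m)"
    unfolding \<alpha>_def m_def by (simp add: power_minus_even)
  have "eventually (\<lambda>u. K (BK (- u)) (BK u) = mean_profile K u \<and> N (BN (- u)) (BN u) = mean_profile N u)
      (at 0)"
    using eventually_conj[OF eventually_stable_profile_eq[OF K assms(3)]
        eventually_stable_profile_eq[OF N assms(4)]]
    unfolding BK_def BN_def by simp
  from landau_o.small.in_cong[OF eventually_mono[OF this], THEN iffD1, OF _ hK]
  have hK': "(\<lambda>u. mean_profile K u - mean_profile N u
      - ((BK (- u) - BN (- u)) + (BK u - BN u)) / 2 - \<alpha> * (u / 2) ^ m) \<in> o[at 0](\<lambda>u. u ^ m)"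
    by simp
  have hP: "(\<lambda>u. mean_profile K u - mean_profile N u - \<alpha> * u ^ m) \<in> o[at 0](\<lambda>u. u ^ m)"
    using profile_difference[OF K N agree] unfolding \<alpha>_def m_def .
  from sum_in_smallo(2)[OF sum_in_smallo(2)[OF hP hK'] smallo_mult_bounded[OF bigo_const[of "1/2"]
      sum_in_smallo(1)[OF hB' hB]]]
  have "(\<lambda>u. (\<alpha> * (2 / 2 ^ m - 1 / 2)) * u ^ m) \<in> o[at 0](\<lambda>u. u ^ m)"
    by (rule smallo_congI) (simp add: power_divide field_simps)
  then have "\<alpha> * (2 / 2 ^ m - 1 / 2) = 0" by (rule monomial_smallo_imp_zero)
  moreover have "(2::real) ^ 4 \<le> 2 ^ m" unfolding m_def using \<open>n \<ge> 2\<close> by (intro power_increasing) auto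
  then have "2 / 2 ^ m - 1 / (2::real) \<noteq> 0" by (simp add: field_simps)
  ultimately show ?thesis unfolding \<alpha>_def by simp
qed

lemma stable_means_coeffs_eq:
  assumes K: "expandable_mean K aK" and N: "expandable_mean N aN"
    and "stable_mean K" "stable_mean N" and "aK 1 = aN 1"
  shows "aK n = aN n"
proof (induction n rule: less_induct)
  case (less n)
  show ?case
  proof (cases "n \<ge> 2")
    case True
    with less.IH show ?thesis by (intro stable_coeff_step[OF K N assms(3,4)]) auto
  next
    case False
    then have "n = 0 \<or> n = 1" by auto
    with assms(5) show ?thesis using expandable_mean_coeff_0[OF K] expandable_mean_coeff_0[OF N] by auto
  qed
qed

section \<open>Fourth-order expansions\<close>

lemma poly_tendsto_at_0: "(poly (P :: real poly) \<longlongrightarrow> poly P 0) (at 0)"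
  by (rule isCont_tendsto_compose[OF poly_isCont tendsto_ident_at])

lemma poly_bigo_at_0:
  fixes P :: "real poly"
  assumes "monom 1 k dvd P"
  shows "poly P \<in> O[at 0](\<lambda>u. u ^ k)"
proof -
  obtain Q where Q: "P = monom 1 k * Q" using assms by (elim dvdE)
  from landau_o.big.mult_left[OF bigo_1_of_tendsto[OF poly_tendsto_at_0], of "\<lambda>u. u ^ k"]
  moreover have "poly P = (\<lambda>u. u ^ k * poly Q u)" unfolding Q by (simp add: fun_eq_iff poly_monom)
  ultimately show ?thesis by simp
qed

lemma near_one_of_poly_approx:
  fixes P :: "real poly"
  assumes "poly P 0 = 1" "(\<lambda>u. p u - poly P u) \<in> o[at 0](\<lambda>u. u ^ k)" "k \<ge> 1"
  shows "near_one p"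
proof -
  have "monom 1 1 dvd P - 1"
    using assms(1) by (simp add: monom_1_dvd_iff' poly_0_coeff_0)
  moreover have "poly (P - 1) = (\<lambda>u. poly P u - 1)" by (rule ext) simp
  ultimately have "(\<lambda>u. poly P u - 1) \<in> O[at 0](\<lambda>u. u)"
    using poly_bigo_at_0[of 1 "P - 1"] by simp
  moreover have "(\<lambda>u. p u - poly P u) \<in> O[at 0](\<lambda>u. u)"
    using landau_o.big_trans[OF landau_o.small_imp_big[OF assms(2)] power_bigo_power_at_0[OF assms(3)]]
    by simp
  ultimately show ?thesis
    unfolding near_one_def by (rule bigo_congI[OF sum_in_bigo(1)]) simp
qed

lemma square_quotient_order4:
  fixes C D T :: "real poly"
  assumes c: "(\<lambda>u. c u - poly C u) \<in> o[at 0](\<lambda>u. u ^ 4)"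
    and d: "(\<lambda>u. d u - u * poly D u) \<in> o[at 0](\<lambda>u. u ^ 4)"
    and C0: "poly C 0 = 1" and T: "monom 1 3 dvd D ^ 2 - C * T"
  shows "(\<lambda>u. d u ^ 2 / c u - u ^ 2 * poly T u) \<in> o[at 0](\<lambda>u. u ^ 4)"
proof -
  have Cl: "(poly C \<longlongrightarrow> 1) (at 0)" using poly_tendsto_at_0[of C] C0 by simp
  have cl: "(c \<longlongrightarrow> 1) (at 0)" by (rule tendsto_of_smallo_diff[OF c Cl])
  have uD: "((\<lambda>u. u * poly D u) \<longlongrightarrow> 0 * poly D 0) (at 0)"
    by (intro tendsto_intros poly_tendsto_at_0)
  have dl: "(d \<longlongrightarrow> 0) (at 0)" using tendsto_of_smallo_diff[OF d uD] by simp
  have "((\<lambda>u. (d u + u * poly D u) / c u) \<longlongrightarrow> (0 + 0 * poly D 0) / 1) (at 0)"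
    using dl uD cl by (intro tendsto_intros) simp_all
  from smallo_mult_bounded[OF bigo_1_of_tendsto[OF this] d]
  have t1: "(\<lambda>u. (d u + u * poly D u) / c u * (d u - u * poly D u)) \<in> o[at 0](\<lambda>u. u ^ 4)" .
  have "((\<lambda>u. u ^ 2 * poly D u ^ 2 / (c u * poly C u)) \<longlongrightarrow> 0 ^ 2 * poly D 0 ^ 2 / (1 * 1)) (at 0)"
    using cl Cl by (intro tendsto_intros poly_tendsto_at_0) simp_all
  from smallo_mult_bounded[OF bigo_1_of_tendsto[OF this]
      landau_o.small.uminus_in_iff[THEN iffD2, OF c]]
  have t2: "(\<lambda>u. u ^ 2 * poly D u ^ 2 / (c u * poly C u) * - (c u - poly C u))
      \<in> o[at 0](\<lambda>u. u ^ 4)" .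
  have "((\<lambda>u. 1 / poly C u) \<longlongrightarrow> 1 / 1) (at 0)"
    using Cl by (intro tendsto_intros) simp_all
  from landau_o.big.mult_left[OF bigo_mult_bounded[OF bigo_1_of_tendsto[OF this] poly_bigo_at_0[OF T]],
      of "\<lambda>u. u ^ 2"]
  have "(\<lambda>u. u ^ 2 * (1 / poly C u * poly (D ^ 2 - C * T) u)) \<in> O[at 0](\<lambda>u. u ^ 5)"
    by (simp add: power_add[symmetric])
  from landau_o.big_small_trans[OF this power_smallo_power_at_0[of 4 5]]
  have t3: "(\<lambda>u. u ^ 2 * (1 / poly C u * poly (D ^ 2 - C * T) u)) \<in> o[at 0](\<lambda>u. u ^ 4)" by simp
  have "eventually (\<lambda>u. c u > 0 \<and> poly C u > 0) (at 0)"
    using cl Cl by (intro eventually_conj eventually_pos_of_tendsto_1)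
  \<comment> \<open>\<open>d\<^sup>2/c - u\<^sup>2T = (d\<^sup>2 - u\<^sup>2D\<^sup>2)/c + u\<^sup>2D\<^sup>2 (1/c - 1/C) + u\<^sup>2 (D\<^sup>2 - C T)/C\<close>\<close>
  then have "eventually (\<lambda>u. (d u + u * poly D u) / c u * (d u - u * poly D u)
      + u ^ 2 * poly D u ^ 2 / (c u * poly C u) * - (c u - poly C u)
      + u ^ 2 * (1 / poly C u * poly (D ^ 2 - C * T) u) = d u ^ 2 / c u - u ^ 2 * poly T u) (at 0)"
    by eventually_elim (simp add: field_simps power2_eq_square)
  from landau_o.small.in_cong[OF this] sum_in_smallo(1)[OF sum_in_smallo(1)[OF t1 t2] t3]
  show ?thesis by simp
qed

lemma fourth_power_quotient_order4:
  fixes D :: "real poly"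
  assumes cl: "(c \<longlongrightarrow> 1) (at 0)" and d: "(\<lambda>u. d u - u * poly D u) \<in> o[at 0](\<lambda>u. u ^ 4)"
  shows "(\<lambda>u. d u ^ 4 / c u ^ 3 - (poly D 0 * u) ^ 4) \<in> o[at 0](\<lambda>u. u ^ 4)"
proof -
  have "monom 1 1 dvd D - [:poly D 0:]" by (simp add: monom_1_dvd_iff' poly_0_coeff_0)
  from landau_o.big.mult_left[OF poly_bigo_at_0[OF this], of "\<lambda>u. u"]
  have "(\<lambda>u. u * poly D u - poly D 0 * u) \<in> O[at 0](\<lambda>u. u ^ 2)"
    by (simp add: power2_eq_square algebra_simps)
  moreover have "(\<lambda>u. d u - u * poly D u) \<in> O[at 0](\<lambda>u. u ^ 2)"
    by (rule landau_o.big_trans[OF landau_o.small_imp_big[OF d] power_bigo_power_at_0]) simp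
  ultimately have dD: "(\<lambda>u. d u - poly D 0 * u) \<in> O[at 0](\<lambda>u. u ^ 2)"
    using sum_in_bigo(1) by fastforce
  have "(\<lambda>u. d u - poly D 0 * u) \<in> O[at 0](\<lambda>u. u)"
    using landau_o.big_trans[OF dD power_bigo_power_at_0[of 1 2]] by simp
  from sum_in_bigo(1)[OF this, of "\<lambda>u. poly D 0 * u"] have "d \<in> O[at 0](\<lambda>u. u)" by simp
  then have "(\<lambda>u. d u ^ 4 - (poly D 0 * u) ^ 4) \<in> O[at 0](\<lambda>u. u ^ (4 + 1))"
    by (intro power_diff_bigo_power dD) simp_all
  from landau_o.big_small_trans[OF this power_smallo_power_at_0[of 4 "4 + 1"]]
  have t1: "(\<lambda>u. d u ^ 4 - (poly D 0 * u) ^ 4) \<in> o[at 0](\<lambda>u. u ^ 4)" by simp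
  have "((\<lambda>u. 1 / c u ^ 3) \<longlongrightarrow> 1 / 1 ^ 3) (at 0)" using cl by (intro tendsto_intros) simp_all
  from smallo_mult_bounded[OF bigo_1_of_tendsto[OF this] t1]
  have t2: "(\<lambda>u. 1 / c u ^ 3 * (d u ^ 4 - (poly D 0 * u) ^ 4)) \<in> o[at 0](\<lambda>u. u ^ 4)" .
  have "((\<lambda>u. 1 / c u ^ 3 - 1) \<longlongrightarrow> 1 / 1 ^ 3 - 1) (at 0)" using cl by (intro tendsto_intros) simp_all
  from smallo_mult_tendsto_0[OF this[simplified], of "\<lambda>u. (poly D 0 * u) ^ 4"]
  have t3: "(\<lambda>u. (1 / c u ^ 3 - 1) * (poly D 0 * u) ^ 4) \<in> o[at 0](\<lambda>u. u ^ 4)"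
    by (simp add: power_mult_distrib)
  from sum_in_smallo(1)[OF t2 t3] show ?thesis by (rule smallo_congI) (simp add: algebra_simps)
qed

lemma profile_order4:
  assumes "expandable_mean X x"
  shows "(\<lambda>u. mean_profile X u - (1 + x 1 * u ^ 2 + x 2 * u ^ 4)) \<in> o[at 0](\<lambda>u. u ^ 4)"
proof -
  have "(\<lambda>u. mean_profile X u - (\<Sum>k\<le>2. x k * u ^ (2 * k))) \<in> o[at 0](\<lambda>u. u ^ 4)"
    using profile_expansion[OF assms, of 2] by simp
  then show ?thesis
    by (rule smallo_congI) (simp add: eval_nat_numeral expandable_mean_coeff_0[OF assms])
qed

lemma mean_quotient_form_order4:
  assumes X: "expandable_mean X x" and np: "near_one p" and nq: "near_one q"
  defines "c \<equiv> \<lambda>u. (p u + q u) / 2" and "d \<equiv> \<lambda>u. (q u - p u) / 2"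
  shows "(\<lambda>u. X (p u) (q u) - (c u + x 1 * (d u ^ 2 / c u) + x 2 * (d u ^ 4 / c u ^ 3)))
           \<in> o[at 0](\<lambda>u. u ^ 4)"
proof -
  have "eventually (\<lambda>u. c u > 0) (at 0)"
    using eventually_pos_of_tendsto_1[OF near_one_tendsto[OF near_one_midpoint[OF np nq]]]
    unfolding c_def .
  then have "eventually (\<lambda>u. X (p u) (q u)
      - (p u + q u) / 2 * (\<Sum>k\<le>2. x k * spread (p u) (q u) ^ (2 * k))
      = X (p u) (q u) - (c u + x 1 * (d u ^ 2 / c u) + x 2 * (d u ^ 4 / c u ^ 3))) (at 0)"
  proof eventually_elim
    case (elim u)
    have sp: "spread (p u) (q u) = d u / c u"
      using elim unfolding spread_def c_def d_def by (simp add: field_simps)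
    have "(p u + q u) / 2 = c u" by (simp add: c_def)
    then show ?case unfolding sp using elim
      by (simp add: eval_nat_numeral expandable_mean_coeff_0[OF X] power_divide field_simps)
  qed
  from landau_o.small.in_cong[OF this] mean_expansion_along_at_0[OF X np nq, of 2]
  show ?thesis by simp
qed

text \<open>The polynomial \<open>T\<close> is \<open>D\<^sup>2/C\<close> truncated below degree 3.\<close>


lemma mean_order4:
  fixes C D T :: "real poly"
  assumes X: "expandable_mean X x" and C0: "poly C 0 = 1" and T: "monom 1 3 dvd D ^ 2 - C * T"
    and p: "(\<lambda>u. p u - (poly C u - u * poly D u)) \<in> o[at 0](\<lambda>u. u ^ 4)"
    and q: "(\<lambda>u. q u - (poly C u + u * poly D u)) \<in> o[at 0](\<lambda>u. u ^ 4)"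
  shows "(\<lambda>u. X (p u) (q u) - (poly C u + x 1 * (u ^ 2 * poly T u) + x 2 * (poly D 0 * u) ^ 4))
           \<in> o[at 0](\<lambda>u. u ^ 4)"
proof -
  define c d where "c u = (p u + q u) / 2" and "d u = (q u - p u) / 2" for u
  have "(\<lambda>u. ((p u - (poly C u - u * poly D u)) + (q u - (poly C u + u * poly D u))) / 2)
      \<in> o[at 0](\<lambda>u. u ^ 4)"
    using sum_in_smallo(1)[OF p q] by simp
  then have hc: "(\<lambda>u. c u - poly C u) \<in> o[at 0](\<lambda>u. u ^ 4)"
    by (rule smallo_congI) (simp add: c_def field_simps)
  have "(\<lambda>u. ((q u - (poly C u + u * poly D u)) - (p u - (poly C u - u * poly D u))) / 2)
      \<in> o[at 0](\<lambda>u. u ^ 4)"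
    using sum_in_smallo(2)[OF q p] by simp
  then have hd: "(\<lambda>u. d u - u * poly D u) \<in> o[at 0](\<lambda>u. u ^ 4)"
    by (rule smallo_congI) (simp add: d_def field_simps)
  have np: "near_one p" using near_one_of_poly_approx[of "C - pCons 0 D" p 4] C0 p by simp
  have nq: "near_one q" using near_one_of_poly_approx[of "C + pCons 0 D" q 4] C0 q by simp
  have cl: "(c \<longlongrightarrow> 1) (at 0)"
    using near_one_tendsto[OF near_one_midpoint[OF np nq]] unfolding c_def .
  have E: "(\<lambda>u. X (p u) (q u) - (c u + x 1 * (d u ^ 2 / c u) + x 2 * (d u ^ 4 / c u ^ 3)))
      \<in> o[at 0](\<lambda>u. u ^ 4)"
    using mean_quotient_form_order4[OF X np nq] unfolding c_def d_def .
  from smallo_mult_bounded[OF bigo_const square_quotient_order4[OF hc hd C0 T]]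
    smallo_mult_bounded[OF bigo_const fourth_power_quotient_order4[OF cl hd]]
  have "(\<lambda>u. x 1 * (d u ^ 2 / c u - u ^ 2 * poly T u)) \<in> o[at 0](\<lambda>u. u ^ 4)"
    "(\<lambda>u. x 2 * (d u ^ 4 / c u ^ 3 - (poly D 0 * u) ^ 4)) \<in> o[at 0](\<lambda>u. u ^ 4)" .
  from sum_in_smallo(1)[OF sum_in_smallo(1)[OF sum_in_smallo(1)[OF E hc] this(1)] this(2)]
  show ?thesis by (rule smallo_congI) (simp add: algebra_simps)
qed

lemma left_step_order4:
  assumes Y: "expandable_mean Y y" and Z: "expandable_mean Z z"
  shows "(\<lambda>u. Z (1 - u) (mean_profile Y u) - (1 - u / 2 + (y 1 / 2 + z 1 / 4) * u ^ 2
      + z 1 * (y 1 / 2 + 1 / 8) * u ^ 3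
      + (y 2 / 2 + z 1 * (1 / 16 + y 1 / 8 + y 1 ^ 2 / 4) + z 2 / 16) * u ^ 4))
    \<in> o[at 0](\<lambda>u. u ^ 4)"
proof -
  \<comment> \<open>\<open>C \<mp> u D\<close> are \<open>1 - u\<close> and the quartic \<open>1 + y\<^sub>1 u\<^sup>2 + y\<^sub>2 u\<^sup>4\<close> approximating the profile of \<open>Y\<close>\<close>
  define C D T where "C = [:1, - 1 / 2, y 1 / 2, 0, y 2 / 2:]" and "D = [:1 / 2, y 1 / 2, 0, y 2 / 2:]"
    and "T = [:1 / 4, y 1 / 2 + 1 / 8, 1 / 16 + y 1 / 8 + y 1 ^ 2 / 4:]"
  have "monom 1 3 dvd D ^ 2 - C * T"
    unfolding monom_1_dvd_iff' C_def D_def T_def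
    by (auto simp: power2_eq_square coeff_mult numeral_eq_Suc atMost_Suc less_Suc_eq field_simps)
  moreover have "(\<lambda>u. (1 - u) - (poly C u - u * poly D u)) \<in> o[at 0](\<lambda>u. u ^ 4)"
    by (simp add: C_def D_def algebra_simps)
  moreover have "(\<lambda>u. mean_profile Y u - (poly C u + u * poly D u)) \<in> o[at 0](\<lambda>u. u ^ 4)"
    using profile_order4[OF Y] by (rule smallo_congI)
      (simp add: C_def D_def algebra_simps power2_eq_square power4_eq_xxxx)
  ultimately have "(\<lambda>u. Z (1 - u) (mean_profile Y u)
      - (poly C u + z 1 * (u ^ 2 * poly T u) + z 2 * (poly D 0 * u) ^ 4)) \<in> o[at 0](\<lambda>u. u ^ 4)"
    by (intro mean_order4[OF Z]) (simp_all add: C_def)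
  then show ?thesis
    by (rule smallo_congI)
      (simp add: C_def D_def T_def algebra_simps power2_eq_square power3_eq_cube power4_eq_xxxx)
qed

lemma right_step_eq_left_step_reflect:
  assumes Y: "expandable_mean Y y" and Z: "expandable_mean Z z"
  shows "eventually (\<lambda>u. Z (1 + u) (mean_profile Y (- u)) = Z (mean_profile Y u) (1 + u)) (at 0)"
  using eventually_abs_less_1_at_0
proof eventually_elim
  case (elim u)
  with Y Z have "mean_profile Y (- u) = mean_profile Y u" "mean_profile Y u > 0" "1 + u > 0"
    by (auto simp: expandable_mean_def mean_profile_minus mean_profile_pos)
  with Z show ?case unfolding expandable_mean_def symmetric_mean_def by simp
qed

definition nested_coeff2 :: "real \<Rightarrow> real \<Rightarrow> real \<Rightarrow> real" where
  "nested_coeff2 x1 y1 z1 = x1 / 4 + y1 / 2 + z1 / 4"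

definition nested_coeff4 :: "real \<Rightarrow> real \<Rightarrow> real \<Rightarrow> real \<Rightarrow> real \<Rightarrow> real \<Rightarrow> real" where
  "nested_coeff4 x1 x2 y1 y2 z1 z2 = x2 / 16 + y2 / 2 + z2 / 16 + z1 / 16 + y1 * z1 / 8
     + y1 ^ 2 * z1 / 4 - x1 * y1 / 8 - 3 * x1 * z1 / 16 - x1 * y1 * z1 / 2"

lemma nested_mean_order4:
  assumes X: "expandable_mean X x" and Y: "expandable_mean Y y" and Z: "expandable_mean Z z"
  shows "(\<lambda>u. X (Z (1 - u) (mean_profile Y u)) (Z (mean_profile Y u) (1 + u))
      - (1 + nested_coeff2 (x 1) (y 1) (z 1) * u ^ 2
         + nested_coeff4 (x 1) (x 2) (y 1) (y 2) (z 1) (z 2) * u ^ 4)) \<in> o[at 0](\<lambda>u. u ^ 4)"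
proof -
  define e2 e3 e4 where "e2 = y 1 / 2 + z 1 / 4" and "e3 = z 1 * (y 1 / 2 + 1 / 8)"
    and "e4 = y 2 / 2 + z 1 * (1 / 16 + y 1 / 8 + y 1 ^ 2 / 4) + z 2 / 16"
  define C D T where "C = [:1, 0, e2, 0, e4:]" and "D = [:1 / 2, 0, - e3:]"
    and "T = [:1 / 4, 0, - e3 - e2 / 4:]"
  define P Q where "P u = Z (1 - u) (mean_profile Y u)" and "Q u = Z (mean_profile Y u) (1 + u)"
    for u
  \<comment> \<open>\<open>Q(u) = P(-u)\<close>, so the even and odd parts of the quartic approximating \<open>P\<close> give \<open>C \<mp> u D\<close>\<close>
  have left: "(\<lambda>u. P u - (poly C u - u * poly D u)) \<in> o[at 0](\<lambda>u. u ^ 4)"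
    using left_step_order4[OF Y Z] unfolding P_def[abs_def]
    by (rule smallo_congI)
      (simp add: C_def D_def e2_def e3_def e4_def algebra_simps
        power2_eq_square power3_eq_cube power4_eq_xxxx)
  have "eventually (\<lambda>u. P (- u) = Q u) (at 0)"
    using right_step_eq_left_step_reflect[OF Y Z] unfolding P_def Q_def by simp
  then have ev: "eventually (\<lambda>u. P (- u) - (poly C u + u * poly D u)
      = Q u - (poly C u + u * poly D u)) (at 0)"
    by eventually_elim simp
  from smallo_at_0_reflect[OF left]
  have "(\<lambda>u. P (- u) - (poly C u + u * poly D u)) \<in> o[at 0](\<lambda>u. u ^ 4)"
    by (simp add: C_def D_def)
  with landau_o.small.in_cong[OF ev]
  have right: "(\<lambda>u. Q u - (poly C u + u * poly D u)) \<in> o[at 0](\<lambda>u. u ^ 4)" by simp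
  have "monom 1 3 dvd D ^ 2 - C * T"
    unfolding monom_1_dvd_iff' C_def D_def T_def
    by (auto simp: power2_eq_square coeff_mult numeral_eq_Suc atMost_Suc less_Suc_eq field_simps)
  from mean_order4[OF X _ this left right]
  have "(\<lambda>u. X (P u) (Q u) - (poly C u + x 1 * (u ^ 2 * poly T u) + x 2 * (poly D 0 * u) ^ 4))
      \<in> o[at 0](\<lambda>u. u ^ 4)"
    by (simp add: C_def)
  then show ?thesis unfolding P_def Q_def
    by (rule smallo_congI) (simp add: C_def D_def T_def e2_def e3_def e4_def nested_coeff2_def
        nested_coeff4_def field_simps power2_eq_square power3_eq_cube power4_eq_xxxx)
qed

lemma order4_coeffs_unique:
  assumes "(\<lambda>u. g u - (1 + A * u ^ 2 + B * u ^ 4)) \<in> o[at 0](\<lambda>u::real. u ^ 4)"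
    and "(\<lambda>u. g u - (1 + A' * u ^ 2 + B' * u ^ 4)) \<in> o[at 0](\<lambda>u::real. u ^ 4)"
  shows "A = A' \<and> B = B'"
proof -
  from sum_in_smallo(2)[OF assms(1) assms(2)]
  have d: "(\<lambda>u. (A' - A) * u ^ 2 + (B' - B) * u ^ 4) \<in> o[at 0](\<lambda>u::real. u ^ 4)"
    by (rule smallo_congI) (simp add: algebra_simps)
  from landau_o.small_big_trans[OF d power_bigo_power_at_0[of 2 4]]
    power_smallo_power_at_0[of 2 4]
  have "(\<lambda>u::real. (A' - A) * u ^ 2) \<in> o[at 0](\<lambda>u. u ^ 2)"
    using sum_in_smallo(2)[of "\<lambda>u. (A' - A) * u ^ 2 + (B' - B) * u ^ 4" _ _ "\<lambda>u. (B' - B) * u ^ 4"]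
    by simp
  then have A: "A' - A = 0" by (rule monomial_smallo_imp_zero)
  with d have "(\<lambda>u::real. (B' - B) * u ^ 4) \<in> o[at 0](\<lambda>u. u ^ 4)" by simp
  then have "B' - B = 0" by (rule monomial_smallo_imp_zero)
  with A show ?thesis by simp
qed

lemma nested_profile_coeffs:
  assumes K: "expandable_mean K k" and Y: "expandable_mean Y y" and Z: "expandable_mean Z z"
    and M: "expandable_mean M m" and eq: "\<forall>s>0. \<forall>t>0. M s t = K (Z s (Y s t)) (Z (Y s t) t)"
  shows "m 1 = nested_coeff2 (k 1) (y 1) (z 1) \<and> m 2 = nested_coeff4 (k 1) (k 2) (y 1) (y 2) (z 1) (z 2)"
proof -
  let ?E = "\<lambda>u. 1 + nested_coeff2 (k 1) (y 1) (z 1) * u ^ 2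
    + nested_coeff4 (k 1) (k 2) (y 1) (y 2) (z 1) (z 2) * u ^ 4"
  have "eventually (\<lambda>u. K (Z (1 - u) (mean_profile Y u)) (Z (mean_profile Y u) (1 + u)) - ?E u
      = mean_profile M u - ?E u) (at 0)"
    using eventually_abs_less_1_at_0
    by eventually_elim (use eq in \<open>simp add: mean_profile_def\<close>)
  from landau_o.small.in_cong[OF this] nested_mean_order4[OF K Y Z]
  have "(\<lambda>u. mean_profile M u - ?E u) \<in> o[at 0](\<lambda>u. u ^ 4)" by simp
  from order4_coeffs_unique[OF profile_order4[OF M] this] show ?thesis by simp
qed

lemma nested_coeff4_fixed_points:
  fixes a b c :: real
  assumes "c = nested_coeff4 a b a b a c" and "c = nested_coeff4 a b a c a b"
  shows "c = 1/6 * a * (1 + a) * (1 - 4 * a)"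
proof -
  define R where "R = a / 16 - 3 * a ^ 2 / 16 - a ^ 3 / 4"
  have "nested_coeff4 a b a b a c = 9 * b / 16 + c / 16 + R"
    "nested_coeff4 a b a c a b = c / 2 + b / 8 + R"
    unfolding nested_coeff4_def R_def by (simp_all add: field_simps power2_eq_square power3_eq_cube)
  with assms have "c = 8 / 3 * R" by linarith
  then show ?thesis unfolding R_def by (simp add: field_simps power2_eq_square power3_eq_cube)
qed

theorem mainTheorem12:
  fixes K N M :: "real \<Rightarrow> real \<Rightarrow> real" and aK aN aM :: "nat \<Rightarrow> real"
  assumes "is_mean K" "symmetric_mean K" "homogeneous_mean K" "stable_mean K"
      and "is_mean N" "symmetric_mean N" "homogeneous_mean N" "stable_mean N"
      and "is_mean M" "symmetric_mean M" "homogeneous_mean M"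
      and "sym_asymp_expansion K aK" "sym_asymp_expansion N aN" "sym_asymp_expansion M aM"
      and "stabilizable K N M" "stabilized K N M"
  shows "aK 1 = aN 1 \<and> aN 1 = aM 1 \<and> (\<forall>n. aK n = aN n) \<and>
         aM 2 = 1/6 * aM 1 * (1 + aM 1) * (1 - 4 * aM 1)"
proof -
  have K: "expandable_mean K aK" and N: "expandable_mean N aN" and M: "expandable_mean M aM"
    using assms unfolding expandable_mean_def by blast+
  from nested_profile_coeffs[OF K N M M] assms(15)
  have A1: "aM 1 = nested_coeff2 (aK 1) (aN 1) (aM 1)"
      and A2: "aM 2 = nested_coeff4 (aK 1) (aK 2) (aN 1) (aN 2) (aM 1) (aM 2)"
    unfolding stabilizable_def by auto
  from nested_profile_coeffs[OF K M N M] assms(16)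
  have B1: "aM 1 = nested_coeff2 (aK 1) (aM 1) (aN 1)"
      and B2: "aM 2 = nested_coeff4 (aK 1) (aK 2) (aM 1) (aM 2) (aN 1) (aN 2)"
    unfolding stabilized_def by auto
  from A1 B1 have k1: "aK 1 = aM 1" and n1: "aN 1 = aM 1" unfolding nested_coeff2_def by linarith+
  then have "\<forall>n. aK n = aN n" using stable_means_coeffs_eq[OF K N assms(4,8)] by simp
  moreover have "aM 2 = 1/6 * aM 1 * (1 + aM 1) * (1 - 4 * aM 1)"
    using A2 B2 \<open>\<forall>n. aK n = aN n\<close> unfolding k1 n1
    by (intro nested_coeff4_fixed_points[where b = "aK 2"]) simp_all
  ultimately show ?thesis using k1 n1 by simp
qed

end
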